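(* Let $\mu$ be a complex measure on the Borel $\sigma$-algebra of $[0,1)$, and let $|\mu|$ be its total variation measure. Assume that for some real $\sigma\ge 0$ the following Hölder condition at $1$ holds: $$(H_\sigma)\qquad \exists K<\infty\ \ \forall x\in[0,1):\quad |\mu|\bigl([x,1)\bigr)\le K(1-x)^\sigma .$$ For real $m\ge 0$ let $u_m=\int_{[0,1)}x^m\,\mu(dx)$ (with $0^0=1$), and for real $t$ let $E(t)=\int_{[0,1)}e^{tx}\,\mu(dx)$. Then, as the real variable $m\to+\infty$, $$u_m=e^{-m}E(m)+O\!\left(\frac{1}{m^{1+\sigma}}\right).$$ *)

theory Defs
  imports "HOL-Analysis.Analysis" "HOL-Library.Landau_Symbols"
begin

text \<open>A complex measure on the Borel sets of [0,1) is represented by its polar/density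
  form: a finite positive measure M on the Borel sets of [0,1) together with an
  M-integrable density f, i.e. mu(A) = integral over A of f dM.
  Its total variation measure is |mu|(A) = integral over A of |f| dM.\<close>

definition cmeasure_apply :: "real measure \<Rightarrow> (real \<Rightarrow> complex) \<Rightarrow> real set \<Rightarrow> complex" where
  "cmeasure_apply M f A = (LINT x:A|M. f x)"

definition total_variation :: "real measure \<Rightarrow> (real \<Rightarrow> complex) \<Rightarrow> real set \<Rightarrow> real" where
  "total_variation M f A = (LINT x:A|M. cmod (f x))"

definition cintegral :: "real measure \<Rightarrow> (real \<Rightarrow> complex) \<Rightarrow> (real \<Rightarrow> complex) \<Rightarrow> complex" where
  "cintegral M f g = (LINT x|M. g x * f x)"

definition rpow :: "real \<Rightarrow> real \<Rightarrow> real" where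
  "rpow x m = (if x = 0 then (if m = 0 then 1 else 0) else x powr m)"

end

theory Submission
  imports Defs "HOL-Real_Asymp.Real_Asymp"
begin

(* The difference is the integral of h(x) = x^m - exp(-m(1-x)) against mu, because
   exp(-m) exp(mx) = exp(-m(1-x)).  Comparing ln x with -(1-x) up to second order gives
   |h(x)| <= (2/m) phi(m(1-x)) with phi(s) = s^2 exp(-s).  On the layer j < m(1-x) <= j+1
   we have phi <= (j+1)^2 exp(-j), and the layer lies in the tail [1-(j+1)/m, 1), whose
   |mu|-mass is at most K ((j+1)/m)^sigma by the Hoelder condition.  Summing over the layers,
   the integral of phi(m(1-x)) against |mu| = |f| dM is at most K m^(-sigma) times the
   convergent series sum_j (j+1)^(2+sigma) exp(-j). *)

lemma abs_powr_minus_exp_le: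
  fixes m x :: real
  assumes m: "m \<ge> 2" and x: "0 \<le> x" "x \<le> 1"
  shows "\<bar>x powr m - exp (- m * (1 - x))\<bar> \<le> 2 * m * (1 - x)^2 * exp (- m * (1 - x))"
proof -
  define y where "y = 1 - x"
  have y: "0 \<le> y" "y \<le> 1" "x = 1 - y" using x by (auto simp: y_def)
  have upper: "x powr m \<le> exp (- m * y)"
  proof (cases "x = 0")
    case False
    with x have "ln x \<le> - y" using ln_le_minus_one[of x] y by simp
    with m have "m * ln x \<le> m * (- y)" by (intro mult_left_mono) auto
    with False x show ?thesis by (simp add: powr_def)
  qed simp
  have lower: "exp (- m * y) - x powr m \<le> 2 * m * y^2 * exp (- m * y)"
  proof (cases "y \<le> 1/2")
    case True
    then have "x > 0" using y by simp
    have "- y - 2 * y^2 \<le> ln x"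
      using ln_one_minus_pos_lower_bound[of y] True y by simp
    with m have "m * (- y - 2 * y^2) \<le> m * ln x" by (simp add: mult_left_mono)
    with \<open>x > 0\<close> have "exp (- m * y) * exp (- (2 * m * y^2)) \<le> x powr m"
      by (simp add: powr_def exp_add[symmetric] algebra_simps)
    moreover have "1 - exp (- (2 * m * y^2)) \<le> 2 * m * y^2"
      using exp_ge_add_one_self[of "- (2 * m * y^2)"] by linarith
    then have "exp (- m * y) * (1 - exp (- (2 * m * y^2))) \<le> exp (- m * y) * (2 * m * y^2)"
      by (simp add: mult_left_mono)
    ultimately show ?thesis by (simp add: algebra_simps)
  next
    case False
    then have "1/4 \<le> y^2" using power_mono[of "1/2" y 2] by (simp add: power2_eq_square)
    with m have "2 * 2 * (1/4) \<le> 2 * m * y^2" by (intro mult_mono) auto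
    then have "exp (- m * y) \<le> 2 * m * y^2 * exp (- m * y)" by simp
    moreover have "0 \<le> x powr m" by simp
    ultimately show ?thesis by linarith
  qed
  show ?thesis using upper lower by (simp add: y_def abs_if)
qed

lemma ennreal_le_suminf: "(f :: nat \<Rightarrow> ennreal) i \<le> (\<Sum>j. f j)"
  using ennreal_suminf_lessD[of f "f i" i] by (meson less_irrefl not_le)

lemma sq_exp_le_suminf_indicator:
  fixes s :: real
  assumes "0 \<le> s"
  shows "ennreal (s^2 * exp (- s))
    \<le> (\<Sum>j. ennreal ((real j + 1)^2 * exp (- real j) * indicator {..real j + 1} s))"
proof -
  define j where "j = nat \<lceil>s - 1\<rceil>"
  have "real j = max 0 (real_of_int \<lceil>s - 1\<rceil>)"
    by (simp add: j_def)
  then have j: "real j \<le> s" "s \<le> real j + 1"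
    using assms ceiling_correct[of "s - 1"] by linarith+
  have "s^2 \<le> (real j + 1)^2"
    using j assms by (intro power_mono) auto
  moreover have "exp (- s) \<le> exp (- real j)"
    using j by simp
  ultimately have "ennreal (s^2 * exp (- s))
      \<le> (real j + 1)^2 * exp (- real j) * indicator {..real j + 1} s"
    using j by (intro ennreal_leI) (simp add: mult_mono)
  also have "\<dots> \<le> (\<Sum>j. ennreal ((real j + 1)^2 * exp (- real j) * indicator {..real j + 1} s))"
    by (rule ennreal_le_suminf[of
          "\<lambda>j. ennreal ((real j + 1)^2 * exp (- real j) * indicator {..real j + 1} s)"])
  finally show ?thesis .
qed

lemma summable_powr_mult_exp: "summable (\<lambda>j::nat. (real j + 1) powr p * exp (- real j))"
proof (rule summable_comparison_test_bigo)
  show "summable (\<lambda>j. norm (real j powr (-2)))"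
    using summable_real_powr_iff[of "-2"] by simp
  show "(\<lambda>j. (real j + 1) powr p * exp (- real j)) \<in> O(\<lambda>j. real j powr (-2))"
    by real_asymp
qed

lemma borel_measurable_restrict_space_borel:
  fixes g :: "'a::topological_space \<Rightarrow> 'b::topological_space"
  assumes "sets M = sets (restrict_space borel S)" and "g \<in> borel_measurable borel"
  shows "g \<in> borel_measurable M"
  using measurable_restrict_space1[OF assms(2)] measurable_cong_sets[OF assms(1) refl] by blast

lemma nn_integral_sq_exp_le_of_tail_bound:
  fixes N :: "real measure" and K \<sigma> m :: real
  assumes sets_N: "sets N = sets (restrict_space borel {0..<1})"
    and tail: "\<And>x. x \<in> {0..<1} \<Longrightarrow> emeasure N {x..<1} \<le> ennreal (K * (1 - x) powr \<sigma>)"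
    and K: "0 \<le> K" and \<sigma>: "0 \<le> \<sigma>" and m: "0 < m"
  shows "(\<integral>\<^sup>+x. ennreal ((m * (1 - x))^2 * exp (- (m * (1 - x)))) \<partial>N)
    \<le> ennreal (K / m powr \<sigma> * (\<Sum>j. (real j + 1) powr (2 + \<sigma>) * exp (- real j)))"
proof -
  have space_N: "space N = {0..<1}"
    using sets_eq_imp_space_eq[OF sets_N] by (simp add: space_restrict_space)
  define c where "c j = (real j + 1)^2 * exp (- real j)" for j :: nat
  define T where "T j = {max 0 (1 - (real j + 1) / m)..<1}" for j :: nat
  have T_sets: "T j \<in> sets N" for j
    unfolding sets_N T_def by (auto simp: sets_restrict_space_iff)
  have layer: "indicator {..real j + 1} (m * (1 - x)) = (indicator (T j) x :: real)"
    if "x \<in> space N" for x j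
    using that m by (auto simp: space_N T_def indicator_def field_simps)
  have T_bound: "emeasure N (T j) \<le> ennreal (K * ((real j + 1) / m) powr \<sigma>)" for j
  proof -
    have "emeasure N (T j) \<le> ennreal (K * (1 - max 0 (1 - (real j + 1) / m)) powr \<sigma>)"
      unfolding T_def using m by (intro tail) auto
    also have "\<dots> \<le> ennreal (K * ((real j + 1) / m) powr \<sigma>)"
      using m by (intro ennreal_leI mult_left_mono powr_mono2 K \<sigma>) auto
    finally show ?thesis .
  qed
  have "(\<integral>\<^sup>+x. ennreal ((m * (1 - x))^2 * exp (- (m * (1 - x)))) \<partial>N)
      \<le> (\<integral>\<^sup>+x. (\<Sum>j. ennreal (c j) * indicator (T j) x) \<partial>N)"
  proof (rule nn_integral_mono)
    fix x assume "x \<in> space N"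
    with m have "0 \<le> m * (1 - x)" by (simp add: space_N)
    from sq_exp_le_suminf_indicator[OF this] show "ennreal ((m * (1 - x))^2 * exp (- (m * (1 - x))))
        \<le> (\<Sum>j. ennreal (c j) * indicator (T j) x)"
      using layer[OF \<open>x \<in> space N\<close>] by (simp add: c_def ennreal_mult' ennreal_indicator)
  qed
  also have "\<dots> = (\<Sum>j. ennreal (c j) * emeasure N (T j))"
    using T_sets by (simp add: nn_integral_suminf nn_integral_cmult_indicator)
  also have "\<dots> \<le> (\<Sum>j. ennreal (K / m powr \<sigma> * ((real j + 1) powr (2 + \<sigma>) * exp (- real j))))"
  proof (intro suminf_le summableI)
    fix j
    have "ennreal (c j) * emeasure N (T j) \<le> ennreal (c j) * ennreal (K * ((real j + 1) / m) powr \<sigma>)"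
      by (intro mult_left_mono T_bound) auto
    also have "\<dots> = ennreal (c j * (K * ((real j + 1) / m) powr \<sigma>))"
      by (simp add: c_def ennreal_mult')
    also have "c j * (K * ((real j + 1) / m) powr \<sigma>)
        = K / m powr \<sigma> * ((real j + 1) powr (2 + \<sigma>) * exp (- real j))"
      using m by (simp add: c_def powr_divide powr_add powr_numeral)
    finally show "ennreal (c j) * emeasure N (T j)
        \<le> ennreal (K / m powr \<sigma> * ((real j + 1) powr (2 + \<sigma>) * exp (- real j)))" .
  qed
  also have "\<dots> = ennreal (\<Sum>j. K / m powr \<sigma> * ((real j + 1) powr (2 + \<sigma>) * exp (- real j)))"
    using K summable_powr_mult_exp by (intro suminf_ennreal2 summable_mult) auto
  also have "\<dots> = ennreal (K / m powr \<sigma> * (\<Sum>j. (real j + 1) powr (2 + \<sigma>) * exp (- real j)))"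
    using summable_powr_mult_exp by (subst suminf_mult) auto
  finally show ?thesis .
qed

lemma integrable_bounded_mult:
  fixes f g :: "'a \<Rightarrow> 'b::{real_normed_field, banach, second_countable_topology}"
  assumes f: "integrable M f" and g: "g \<in> borel_measurable M"
    and bound: "\<And>x. x \<in> space M \<Longrightarrow> norm (g x) \<le> B"
  shows "integrable M (\<lambda>x. g x * f x)"
proof (rule Bochner_Integration.integrable_bound)
  show "integrable M (\<lambda>x. B * norm (f x))" using f by simp
  show "(\<lambda>x. g x * f x) \<in> borel_measurable M" using f g by simp
  show "AE x in M. norm (g x * f x) \<le> norm (B * norm (f x))"
    by (intro AE_I2)
      (auto simp: norm_mult abs_mult intro!: mult_right_mono order_trans[OF bound abs_ge_self])
qed

lemma ennreal_norm_cintegral_le: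
  assumes f: "f \<in> borel_measurable M" and g: "g \<in> borel_measurable M"
  shows "ennreal (norm (cintegral M f g))
    \<le> (\<integral>\<^sup>+x. ennreal (norm (g x)) \<partial>density M (\<lambda>x. ennreal (norm (f x))))"
proof (cases "integrable M (\<lambda>x. g x * f x)")
  case True
  then have "ennreal (norm (cintegral M f g)) \<le> (\<integral>\<^sup>+x. ennreal (norm (g x * f x)) \<partial>M)"
    unfolding cintegral_def by (rule integral_norm_bound_ennreal)
  also have "\<dots> = (\<integral>\<^sup>+x. ennreal (norm (g x)) \<partial>density M (\<lambda>x. ennreal (norm (f x))))"
    using f g by (simp add: nn_integral_density norm_mult ennreal_mult mult.commute)
  finally show ?thesis .
next
  case False
  then show ?thesis by (simp add: cintegral_def not_integrable_integral_eq)
qed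

lemma emeasure_density_norm_eq_total_variation:
  assumes f: "integrable M f" and A: "A \<in> sets M"
  shows "emeasure (density M (\<lambda>x. ennreal (norm (f x)))) A = ennreal (total_variation M f A)"
proof -
  have "integrable M (\<lambda>x. indicator A x *\<^sub>R norm (f x))"
    using integrable_mult_indicator[OF A] f by blast
  then show ?thesis
    using f A unfolding total_variation_def set_lebesgue_integral_def
    by (simp add: emeasure_density nn_integral_eq_integral[symmetric] ennreal_mult'' ennreal_indicator
        mult.commute)
qed

lemma cintegral_powr_minus_exp:
  fixes M :: "real measure" and m :: real
  assumes sets_M: "sets M = sets (restrict_space borel {0..<1::real})"
    and f: "integrable M f" and m: "0 < m"
  shows "cintegral M f (\<lambda>x. of_real (rpow x m))
      - of_real (exp (- m)) * cintegral M f (\<lambda>x. of_real (exp (m * x)))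
    = cintegral M f (\<lambda>x. of_real (x powr m - exp (- m * (1 - x))))"
proof -
  have space_M: "space M = {0..<1}"
    using sets_eq_imp_space_eq[OF sets_M] by (simp add: space_restrict_space)
  have powr_int: "integrable M (\<lambda>x. of_real (x powr m) * f x)"
  proof (rule integrable_bounded_mult[OF f])
    show "norm (complex_of_real (x powr m)) \<le> 1" if "x \<in> space M" for x
      using that m powr_mono2[of m x 1] by (auto simp: space_M)
  qed (intro borel_measurable_restrict_space_borel[OF sets_M], measurable)
  have exp_int: "integrable M (\<lambda>x. of_real (exp (- m * (1 - x))) * f x)"
  proof (rule integrable_bounded_mult[OF f])
    show "norm (complex_of_real (exp (- m * (1 - x)))) \<le> 1" if "x \<in> space M" for x
      using that m by (auto simp: space_M)
  qed (intro borel_measurable_restrict_space_borel[OF sets_M], measurable)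
  have "of_real (exp (- m)) * cintegral M f (\<lambda>x. of_real (exp (m * x)))
      = cintegral M f (\<lambda>x. of_real (exp (- m * (1 - x))))"
  proof -
    have "exp (- m) * exp (m * x) = exp (- m * (1 - x))" for x
      by (simp add: exp_add[symmetric] algebra_simps)
    then have "of_real (exp (- m)) * (of_real (exp (m * x)) * f x)
        = of_real (exp (- m * (1 - x))) * f x" for x
      by (metis mult.assoc of_real_mult)
    then show ?thesis
      unfolding cintegral_def integral_mult_right_zero[symmetric] by presburger
  qed
  moreover have "rpow x m = x powr m" for x
    using m by (simp add: rpow_def)
  ultimately show ?thesis
    unfolding cintegral_def using Bochner_Integration.integral_diff[OF powr_int exp_int]
    by (simp add: left_diff_distrib)
qed

lemma norm_cintegral_powr_minus_exp_le:
  fixes M :: "real measure" and f :: "real \<Rightarrow> complex" and K \<sigma> m :: real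
  assumes sets_M: "sets M = sets (restrict_space borel {0..<1::real})"
    and f: "integrable M f"
    and tail: "\<And>x. x \<in> {0..<1} \<Longrightarrow> total_variation M f {x..<1} \<le> K * (1 - x) powr \<sigma>"
    and K: "0 \<le> K" and \<sigma>: "0 \<le> \<sigma>" and m: "2 \<le> m"
  shows "norm (cintegral M f (\<lambda>x. of_real (x powr m - exp (- m * (1 - x)))))
    \<le> 2 * K * (\<Sum>j. (real j + 1) powr (2 + \<sigma>) * exp (- real j)) / m powr (1 + \<sigma>)"
proof -
  define N where "N = density M (\<lambda>x. ennreal (norm (f x)))"
  define S where "S = (\<Sum>j. (real j + 1) powr (2 + \<sigma>) * exp (- real j))"
  have S: "0 \<le> S"
    unfolding S_def using summable_powr_mult_exp by (rule suminf_nonneg) simp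
  have sets_N: "sets N = sets (restrict_space borel {0..<1})"
    using sets_M by (simp add: N_def)
  have space_N: "space N = {0..<1}"
    using sets_eq_imp_space_eq[OF sets_N] by (simp add: space_restrict_space)
  have tail_N: "emeasure N {x..<1} \<le> ennreal (K * (1 - x) powr \<sigma>)" if "x \<in> {0..<1}" for x
  proof -
    have "{x..<1} \<in> sets M"
      using that by (simp add: sets_M sets_restrict_space_iff)
    then show ?thesis
      using emeasure_density_norm_eq_total_variation[OF f] tail[OF that]
      by (simp add: N_def ennreal_leI)
  qed
  have "ennreal (norm (cintegral M f (\<lambda>x. of_real (x powr m - exp (- m * (1 - x))))))
      \<le> (\<integral>\<^sup>+x. ennreal (norm (complex_of_real (x powr m - exp (- m * (1 - x))))) \<partial>N)"
    unfolding N_def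
    by (intro ennreal_norm_cintegral_le borel_measurable_integrable[OF f]
        borel_measurable_restrict_space_borel[OF sets_M]) measurable
  also have "\<dots> \<le> (\<integral>\<^sup>+x. ennreal (2 / m) * ennreal ((m * (1 - x))^2 * exp (- (m * (1 - x)))) \<partial>N)"
  proof (rule nn_integral_mono)
    fix x assume "x \<in> space N"
    then have "\<bar>x powr m - exp (- m * (1 - x))\<bar> \<le> 2 * m * (1 - x)^2 * exp (- m * (1 - x))"
      by (intro abs_powr_minus_exp_le[OF m]) (auto simp: space_N)
    also have "\<dots> = 2 / m * ((m * (1 - x))^2 * exp (- (m * (1 - x))))"
      using m by (simp add: field_simps power2_eq_square)
    finally show "ennreal (norm (complex_of_real (x powr m - exp (- m * (1 - x)))))
        \<le> ennreal (2 / m) * ennreal ((m * (1 - x))^2 * exp (- (m * (1 - x))))"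
      using m by (simp add: ennreal_mult'[symmetric] ennreal_leI del: of_real_diff)
  qed
  also have "\<dots> = ennreal (2 / m) * (\<integral>\<^sup>+x. ennreal ((m * (1 - x))^2 * exp (- (m * (1 - x)))) \<partial>N)"
    by (intro nn_integral_cmult borel_measurable_restrict_space_borel[OF sets_N]) measurable
  also have "\<dots> \<le> ennreal (2 / m) * ennreal (K / m powr \<sigma> * S)"
    unfolding S_def using m
    by (intro mult_left_mono nn_integral_sq_exp_le_of_tail_bound[OF sets_N tail_N K \<sigma>]) auto
  also have "\<dots> = ennreal (2 * K * S / m powr (1 + \<sigma>))"
    using m by (simp add: ennreal_mult'[symmetric] powr_add mult.assoc)
  finally show ?thesis
    using K S m by (simp add: S_def ennreal_le_iff)
qed

theorem proposition1:
  fixes M :: "real measure" and f :: "real \<Rightarrow> complex" and \<sigma> :: real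
  assumes sets_M: "sets M = sets (restrict_space borel {0..<1::real})"
    and fin: "finite_measure M"
    and f_int: "integrable M f"
    and sigma_nonneg: "\<sigma> \<ge> 0"
    and holder: "\<exists>K::real. \<forall>x\<in>{0..<1::real}.
                   total_variation M f {x..<1} \<le> K * (1 - x) powr \<sigma>"
  shows "(\<lambda>m::real. cintegral M f (\<lambda>x. complex_of_real (rpow x m))
            - complex_of_real (exp (- m)) * cintegral M f (\<lambda>x. complex_of_real (exp (m * x))))
         \<in> O[at_top](\<lambda>m. complex_of_real (1 / m powr (1 + \<sigma>)))"
proof -
  obtain K where K: "\<And>x. x \<in> {0..<1} \<Longrightarrow> total_variation M f {x..<1} \<le> K * (1 - x) powr \<sigma>"
    using holder by blast
  have "0 \<le> total_variation M f {0..<1}"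
    unfolding total_variation_def set_lebesgue_integral_def by (simp add: integral_nonneg_AE)
  with K[of 0] have K_nonneg: "0 \<le> K" by simp
  define S where "S = (\<Sum>j. (real j + 1) powr (2 + \<sigma>) * exp (- real j))"
  have "\<forall>\<^sub>F m in at_top.
      norm (cintegral M f (\<lambda>x. complex_of_real (rpow x m))
            - complex_of_real (exp (- m)) * cintegral M f (\<lambda>x. complex_of_real (exp (m * x))))
      \<le> 2 * K * S * norm (complex_of_real (1 / m powr (1 + \<sigma>)))"
    using eventually_ge_at_top[of 2]
  proof eventually_elim
    case (elim m)
    then show ?case
      using cintegral_powr_minus_exp[OF sets_M f_int]
        norm_cintegral_powr_minus_exp_le[OF sets_M f_int K K_nonneg sigma_nonneg elim]
      by (simp add: S_def norm_divide)
  qed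
  then show ?thesis by (rule bigoI)
qed

end
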